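(* For a hypergraph $H$ on a finite set $X$, let $\gamma(H)\in\mathrm{Bool}(X)$ be $\gamma(H)(A)=|\{Y\in E(H)\mid Y\subseteq A\}|$. Then: the map $H\mapsto\gamma(H)$ is injective; $\gamma(H)$ is rigid; for hypergraphs $G$ on $X$ and $H$ on $Y$ with $X\cap Y=\emptyset$, $\gamma(GH)=\gamma(G)\star_1\gamma(H)$, where $E(GH)=E(G)\sqcup E(H)$; for $X'\subseteq X$, $\gamma(H_{\mid X'})=\gamma(H)_{\mid X'}$ where $E(H_{\mid X'})=\{Y\in E(H)\mid Y\subseteq X'\}$; and $\gamma(H)$ is modular iff every hyperedge of $H$ has cardinality $1$.
   Context: A boolean function on a finite set $X$ is a map $f:\mathcal{P}(X)\to\mathbb{Z}$ with $f(\emptyset)=0$; $\mathrm{Bool}(X)$ is their set; $f_{\mid Y}$ is the restriction to $\mathcal{P}(Y)$. For disjoint $X,Y$, $(f\star_1g)(A)=f(A\cap X)+g(A\cap Y)$. $f$ is modular if $f(A)=\sum_{x\in A}f(\{x\})$ for all $A\subseteq X$. For nonempty $X$, $f$ is indecomposable if $f=f'\star_1f''$ with $f'\in\mathrm{Bool}(X\setminus Y)$, $f''\in\mathrm{Bool}(Y)$ forces $Y\in\{\emptyset,X\}$. Each $f$ decomposes uniquely as $f=\prod^{\star_1}_{Y}f_{\mid Y}$ over the classes $Y$ of an equivalence on $X$ with each $f_{\mid Y}$ indecomposable; these classes are the indecomposable components. An indecomposable $f$ is rigid if for all disjoint $A,B\subseteq X$ with $f(A\sqcup B)=f(A)+f(B)$,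 one has $f(A'\sqcup B')=f(A')+f(B')$ for all $A'\subseteq A$, $B'\subseteq B$; a general $f$ is rigid if $f_{\mid Y}$ is rigid for each indecomposable component $Y$. A hypergraph $H$ on $X$ is a set $E(H)$ of nonempty subsets of $X$ (hyperedges). *)

theory Defs
  imports Main
begin

(* A boolean function on X is represented as f :: 'a set => int; values on
   sets not contained in X are irrelevant and fixed to 0 (extensional convention). *)
definition Bool :: "'a set \<Rightarrow> ('a set \<Rightarrow> int) set" where
  "Bool X = {f. f {} = 0 \<and> (\<forall>A. \<not> A \<subseteq> X \<longrightarrow> f A = 0)}"

definition restr :: "('a set \<Rightarrow> int) \<Rightarrow> 'a set \<Rightarrow> ('a set \<Rightarrow> int)" where
  "restr f Y = (\<lambda>A. if A \<subseteq> Y then f A else 0)"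

definition star1 :: "'a set \<Rightarrow> 'a set \<Rightarrow> ('a set \<Rightarrow> int) \<Rightarrow> ('a set \<Rightarrow> int) \<Rightarrow> ('a set \<Rightarrow> int)" where
  "star1 X Y f g = (\<lambda>A. if A \<subseteq> X \<union> Y then f (A \<inter> X) + g (A \<inter> Y) else 0)"

definition modular :: "'a set \<Rightarrow> ('a set \<Rightarrow> int) \<Rightarrow> bool" where
  "modular X f \<longleftrightarrow> (\<forall>A. A \<subseteq> X \<longrightarrow> f A = (\<Sum>x\<in>A. f {x}))"

definition indecomposable :: "'a set \<Rightarrow> ('a set \<Rightarrow> int) \<Rightarrow> bool" where
  "indecomposable X f \<longleftrightarrow> X \<noteq> {} \<and>
     (\<forall>Y f' f''. Y \<subseteq> X \<and> f' \<in> Bool (X - Y) \<and> f'' \<in> Bool Y \<and>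
        f = star1 (X - Y) Y f' f'' \<longrightarrow> Y = {} \<or> Y = X)"

definition indec_decomposition :: "'a set \<Rightarrow> ('a set \<Rightarrow> int) \<Rightarrow> 'a set set \<Rightarrow> bool" where
  "indec_decomposition X f P \<longleftrightarrow>
     \<Union>P = X \<and> {} \<notin> P \<and> (\<forall>Y\<in>P. \<forall>Z\<in>P. Y \<noteq> Z \<longrightarrow> Y \<inter> Z = {}) \<and>
     (\<forall>A. A \<subseteq> X \<longrightarrow> f A = (\<Sum>Y\<in>P. f (A \<inter> Y))) \<and>
     (\<forall>Y\<in>P. indecomposable Y (restr f Y))"

definition rigid_indec :: "'a set \<Rightarrow> ('a set \<Rightarrow> int) \<Rightarrow> bool" where
  "rigid_indec X f \<longleftrightarrow>
     (\<forall>A B. A \<subseteq> X \<and> B \<subseteq> X \<and> A \<inter> B = {} \<and> f (A \<union> B) = f A + f B \<longrightarrow>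
        (\<forall>A' B'. A' \<subseteq> A \<and> B' \<subseteq> B \<longrightarrow> f (A' \<union> B') = f A' + f B'))"

definition rigid :: "'a set \<Rightarrow> ('a set \<Rightarrow> int) \<Rightarrow> bool" where
  "rigid X f \<longleftrightarrow> (\<exists>P. indec_decomposition X f P \<and> (\<forall>Y\<in>P. rigid_indec Y (restr f Y)))"

definition hypergraph :: "'a set \<Rightarrow> 'a set set \<Rightarrow> bool" where
  "hypergraph X E \<longleftrightarrow> (\<forall>e\<in>E. e \<noteq> {} \<and> e \<subseteq> X)"

definition gamma :: "'a set \<Rightarrow> 'a set set \<Rightarrow> ('a set \<Rightarrow> int)" where
  "gamma X E = (\<lambda>A. if A \<subseteq> X then int (card {Y\<in>E. Y \<subseteq> A}) else 0)"

end

(*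
  gamma H (A \<union> B) - gamma H A - gamma H B counts the hyperedges inside A \<union> B meeting both
  A and B, so gamma H is additive on a disjoint pair exactly when no hyperedge crosses it; this
  passes to every smaller pair, which is rigidity. A splitting f = f' \<star>\<^sub>1 f'' likewise forces
  every hyperedge to one side, so the blocks of a partition of X with the largest number of
  blocks among those keeping each hyperedge inside a block are the indecomposable components.
  Injectivity: on an inclusion-minimal set where two hypergraphs differ, the counts of
  hyperedges below it differ by exactly one.
*)
theory Submission
  imports Defs "HOL-Library.Disjoint_Sets"
begin

lemma finite_hyperedges: "finite X \<Longrightarrow> hypergraph X H \<Longrightarrow> finite H"
  unfolding hypergraph_def by (meson Pow_iff finite_Pow_iff finite_subset subsetI)

lemma hypergraph_restrict: "hypergraph X H \<Longrightarrow> hypergraph Y {e\<in>H. e \<subseteq> Y}"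
  unfolding hypergraph_def by blast

lemma hyperedge_not_subset_disjoint:
  assumes "hypergraph X H" "e \<in> H" "A \<inter> B = {}" "e \<subseteq> A"
  shows "\<not> e \<subseteq> B"
proof
  assume "e \<subseteq> B"
  with \<open>e \<subseteq> A\<close> \<open>A \<inter> B = {}\<close> have "e = {}" by blast
  with assms(1,2) show False unfolding hypergraph_def by blast
qed

lemma gamma_eq_card: "A \<subseteq> X \<Longrightarrow> gamma X H A = int (card {e\<in>H. e \<subseteq> A})"
  unfolding gamma_def by simp

lemma gamma_in_Bool: "hypergraph X H \<Longrightarrow> gamma X H \<in> Bool X"
  unfolding Bool_def gamma_def hypergraph_def by auto

lemma gamma_restrict:
  assumes "X' \<subseteq> X"
  shows "gamma X' {e\<in>H. e \<subseteq> X'} = restr (gamma X H) X'"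
proof
  fix A
  have "A \<subseteq> X' \<Longrightarrow> {e \<in> {e\<in>H. e \<subseteq> X'}. e \<subseteq> A} = {e\<in>H. e \<subseteq> A}" by blast
  then show "gamma X' {e\<in>H. e \<subseteq> X'} A = restr (gamma X H) X' A"
    using assms unfolding gamma_def restr_def by auto
qed

lemma gamma_Un_disjoint_hypergraphs:
  assumes "finite X" "finite Y" "X \<inter> Y = {}" "hypergraph X G" "hypergraph Y K"
  shows "gamma (X \<union> Y) (G \<union> K) = star1 X Y (gamma X G) (gamma Y K)"
proof
  fix A
  have "{e\<in>G \<union> K. e \<subseteq> A} = {e\<in>G. e \<subseteq> A \<inter> X} \<union> {e\<in>K. e \<subseteq> A \<inter> Y}"
    using assms(4,5) unfolding hypergraph_def by blast
  moreover have "{e\<in>G. e \<subseteq> A \<inter> X} \<inter> {e\<in>K. e \<subseteq> A \<inter> Y} = {}"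
    using assms(3,4) hyperedge_not_subset_disjoint by blast
  ultimately have "card {e\<in>G \<union> K. e \<subseteq> A} = card {e\<in>G. e \<subseteq> A \<inter> X} + card {e\<in>K. e \<subseteq> A \<inter> Y}"
    using finite_hyperedges[OF assms(1,4)] finite_hyperedges[OF assms(2,5)]
    by (simp add: card_Un_disjoint)
  then show "gamma (X \<union> Y) (G \<union> K) A = star1 X Y (gamma X G) (gamma Y K) A"
    unfolding gamma_def star1_def by simp
qed

lemma gamma_Un_disjoint:
  assumes "finite X" "hypergraph X H" "A \<union> B \<subseteq> X" "A \<inter> B = {}"
  shows "gamma X H (A \<union> B) = gamma X H A + gamma X H B
           + int (card {e\<in>H. e \<subseteq> A \<union> B \<and> \<not> e \<subseteq> A \<and> \<not> e \<subseteq> B})"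
proof -
  let ?in_A = "{e\<in>H. e \<subseteq> A}" and ?in_B = "{e\<in>H. e \<subseteq> B}"
    and ?crossing = "{e\<in>H. e \<subseteq> A \<union> B \<and> \<not> e \<subseteq> A \<and> \<not> e \<subseteq> B}"
  have "finite H" using assms(1,2) by (rule finite_hyperedges)
  have "{e\<in>H. e \<subseteq> A \<union> B} = (?in_A \<union> ?in_B) \<union> ?crossing" by blast
  moreover have "?in_A \<inter> ?in_B = {}"
    using assms(2,4) hyperedge_not_subset_disjoint by blast
  moreover have "(?in_A \<union> ?in_B) \<inter> ?crossing = {}" by blast
  ultimately have "card {e\<in>H. e \<subseteq> A \<union> B} = card ?in_A + card ?in_B + card ?crossing"
    using \<open>finite H\<close> by (simp add: card_Un_disjoint)
  with assms(3) show ?thesis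
    by (simp add: gamma_eq_card)
qed

lemma gamma_additive_iff:
  assumes "finite X" "hypergraph X H" "A \<union> B \<subseteq> X" "A \<inter> B = {}"
  shows "gamma X H (A \<union> B) = gamma X H A + gamma X H B
           \<longleftrightarrow> (\<forall>e\<in>H. e \<subseteq> A \<union> B \<longrightarrow> e \<subseteq> A \<or> e \<subseteq> B)"
  using gamma_Un_disjoint[OF assms] finite_hyperedges[OF assms(1,2)] by auto

lemma rigid_indec_gamma:
  assumes "finite X" "hypergraph X H"
  shows "rigid_indec X (gamma X H)"
  unfolding rigid_indec_def
proof (intro allI impI, elim conjE)
  fix A B A' B'
  assume "A \<subseteq> X" "B \<subseteq> X" "A \<inter> B = {}" "A' \<subseteq> A" "B' \<subseteq> B"
    and "gamma X H (A \<union> B) = gamma X H A + gamma X H B"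
  moreover have "A \<union> B \<subseteq> X" "A' \<union> B' \<subseteq> X" "A' \<inter> B' = {}"
    using calculation by blast+
  ultimately have "\<forall>e\<in>H. e \<subseteq> A \<union> B \<longrightarrow> e \<subseteq> A \<or> e \<subseteq> B"
    using gamma_additive_iff[OF assms \<open>A \<union> B \<subseteq> X\<close> \<open>A \<inter> B = {}\<close>] by simp
  have "e \<subseteq> A' \<or> e \<subseteq> B'" if "e \<in> H" "e \<subseteq> A' \<union> B'" for e
  proof -
    have "e \<subseteq> A \<or> e \<subseteq> B"
      using \<open>\<forall>e\<in>H. e \<subseteq> A \<union> B \<longrightarrow> e \<subseteq> A \<or> e \<subseteq> B\<close> that \<open>A' \<subseteq> A\<close> \<open>B' \<subseteq> B\<close> by blast
    then show ?thesis
      using that(2) \<open>A \<inter> B = {}\<close> \<open>A' \<subseteq> A\<close> \<open>B' \<subseteq> B\<close> by blast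
  qed
  then show "gamma X H (A' \<union> B') = gamma X H A' + gamma X H B'"
    using gamma_additive_iff[OF assms \<open>A' \<union> B' \<subseteq> X\<close> \<open>A' \<inter> B' = {}\<close>] by blast
qed

lemma hyperedges_split_by_star1:
  assumes "finite X" "hypergraph X H" "Z \<subseteq> X"
    and "f' \<in> Bool (X - Z)" "f'' \<in> Bool Z" "gamma X H = star1 (X - Z) Z f' f''"
    and "e \<in> H"
  shows "e \<subseteq> X - Z \<or> e \<subseteq> Z"
proof -
  have "(X - Z) \<union> Z = X" using assms(3) by blast
  then have gamma_split: "gamma X H A = f' (A \<inter> (X - Z)) + f'' (A \<inter> Z)" if "A \<subseteq> X" for A
    using that unfolding assms(6) star1_def by simp
  have "f' {} = 0" "f'' {} = 0"
    using assms(4,5) unfolding Bool_def by auto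
  have "e \<subseteq> X" using assms(2,7) unfolding hypergraph_def by blast
  let ?outside = "e \<inter> (X - Z)" and ?inside = "e \<inter> Z"
  have "?outside \<inter> (X - Z) = ?outside" "?outside \<inter> Z = {}"
    "?inside \<inter> (X - Z) = {}" "?inside \<inter> Z = ?inside" "?outside \<subseteq> X" "?inside \<subseteq> X"
    using \<open>e \<subseteq> X\<close> by blast+
  then have "gamma X H ?outside = f' ?outside" "gamma X H ?inside = f'' ?inside"
    using gamma_split[of ?outside] gamma_split[of ?inside] \<open>f' {} = 0\<close> \<open>f'' {} = 0\<close> by simp_all
  with gamma_split[OF \<open>e \<subseteq> X\<close>]
  have "gamma X H e = gamma X H ?outside + gamma X H ?inside" by linarith
  moreover have "?outside \<union> ?inside = e" "?outside \<inter> ?inside = {}"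
    using \<open>e \<subseteq> X\<close> by blast+
  ultimately have "\<forall>e'\<in>H. e' \<subseteq> e \<longrightarrow> e' \<subseteq> ?outside \<or> e' \<subseteq> ?inside"
    using gamma_additive_iff[OF assms(1,2), of ?outside ?inside] \<open>e \<subseteq> X\<close> by simp
  with assms(7) show ?thesis
    by (metis Int_subset_iff order_refl)
qed

definition hyperedge_partition :: "'a set \<Rightarrow> 'a set set \<Rightarrow> 'a set set \<Rightarrow> bool" where
  "hyperedge_partition X H P \<longleftrightarrow> partition_on X P \<and> (\<forall>e\<in>H. \<exists>Y\<in>P. e \<subseteq> Y)"

lemma gamma_sum_hyperedge_partition:
  assumes "finite X" "hypergraph X H" "hyperedge_partition X H P" "A \<subseteq> X"
  shows "gamma X H A = (\<Sum>Y\<in>P. gamma X H (A \<inter> Y))"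
proof -
  have "partition_on X P" "\<forall>e\<in>H. \<exists>Y\<in>P. e \<subseteq> Y"
    using assms(3) unfolding hyperedge_partition_def by blast+
  then have "finite P" using assms(1) finite_elements by blast
  have "{e\<in>H. e \<subseteq> A} = (\<Union>Y\<in>P. {e\<in>H. e \<subseteq> A \<inter> Y})"
    using \<open>\<forall>e\<in>H. \<exists>Y\<in>P. e \<subseteq> Y\<close> by auto
  moreover have "disjoint_family_on (\<lambda>Y. {e\<in>H. e \<subseteq> A \<inter> Y}) P"
    unfolding disjoint_family_on_def
  proof (intro ballI impI)
    fix Y W assume "Y \<in> P" "W \<in> P" "Y \<noteq> W"
    then have "(A \<inter> Y) \<inter> (A \<inter> W) = {}"
      using partition_onD2[OF \<open>partition_on X P\<close>] by (auto dest: disjointD)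
    then show "{e\<in>H. e \<subseteq> A \<inter> Y} \<inter> {e\<in>H. e \<subseteq> A \<inter> W} = {}"
      using assms(2) hyperedge_not_subset_disjoint by blast
  qed
  ultimately have "card {e\<in>H. e \<subseteq> A} = (\<Sum>Y\<in>P. card {e\<in>H. e \<subseteq> A \<inter> Y})"
    using \<open>finite P\<close> finite_hyperedges[OF assms(1,2)] by (simp add: card_UN_disjoint')
  then show ?thesis
    using assms(4) by (simp add: gamma_eq_card le_infI1)
qed

lemma partition_on_split_block:
  assumes "partition_on X P" "Y \<in> P" "Z \<subseteq> Y" "Z \<noteq> {}" "Z \<noteq> Y"
  shows "partition_on X (insert (Y - Z) (insert Z (P - {Y})))"
    and "finite P \<Longrightarrow> card (insert (Y - Z) (insert Z (P - {Y}))) = Suc (card P)"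
proof -
  have "Y - Z \<noteq> {}" using assms(3,5) by blast
  have disjnt_Y: "disjnt U W" if "U \<subseteq> Y" "W \<in> P - {Y}" for U W
  proof -
    have "Y \<inter> W = {}"
      using disjointD[OF partition_onD2[OF assms(1)] assms(2)] that(2) by blast
    with that(1) show ?thesis unfolding disjnt_def by blast
  qed
  have not_old_block: "U \<notin> P - {Y}" if "U \<subseteq> Y" "U \<noteq> {}" for U
  proof
    assume "U \<in> P - {Y}"
    with disjnt_Y[OF that(1)] have "disjnt U U" .
    with that(2) show False by simp
  qed
  show "partition_on X (insert (Y - Z) (insert Z (P - {Y})))"
  proof (rule partition_onI)
    have "\<Union>P = Y \<union> \<Union>(P - {Y})" using assms(2) by blast
    then show "\<Union> (insert (Y - Z) (insert Z (P - {Y}))) = X"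
      using partition_onD1[OF assms(1)] assms(3) by auto
    show "{} \<notin> insert (Y - Z) (insert Z (P - {Y}))"
      using partition_onD3[OF assms(1)] \<open>Y - Z \<noteq> {}\<close> assms(4) by simp
    fix U W assume "U \<in> insert (Y - Z) (insert Z (P - {Y}))" "W \<in> insert (Y - Z) (insert Z (P - {Y}))"
      "U \<noteq> W"
    then consider "U \<in> {Y - Z, Z}" "W \<in> {Y - Z, Z}" | "U \<in> {Y - Z, Z}" "W \<in> P - {Y}"
      | "U \<in> P - {Y}" "W \<in> {Y - Z, Z}" | "U \<in> P - {Y}" "W \<in> P - {Y}"
      by (metis insert_iff)
    then show "disjnt U W"
    proof cases
      case 1
      with \<open>U \<noteq> W\<close> show ?thesis by (auto simp: disjnt_def)
    next
      case 2
      with assms(3) show ?thesis by (auto intro: disjnt_Y)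
    next
      case 3
      with assms(3) show ?thesis by (auto intro: disjnt_Y disjnt_sym)
    next
      case 4
      with \<open>U \<noteq> W\<close> show ?thesis
        using disjointD[OF partition_onD2[OF assms(1)]] unfolding disjnt_def by blast
    qed
  qed
  assume "finite P"
  have "card P > 0" using \<open>finite P\<close> assms(2) card_gt_0_iff by blast
  moreover have "Y - Z \<noteq> Z" using assms(4) by blast
  ultimately show "card (insert (Y - Z) (insert Z (P - {Y}))) = Suc (card P)"
    using not_old_block[of Z] not_old_block[of "Y - Z"] \<open>Y - Z \<noteq> {}\<close> \<open>finite P\<close> assms(2-4)
    by (simp add: card_Suc_Diff1)
qed

lemma indecomposable_block_of_finest_hyperedge_partition:
  assumes "finite X" "hypergraph X H" "hyperedge_partition X H P"
    and finest: "\<And>Q. hyperedge_partition X H Q \<Longrightarrow> card Q \<le> card P"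
    and "Y \<in> P"
  shows "indecomposable Y (restr (gamma X H) Y)"
  unfolding indecomposable_def
proof (intro conjI allI impI)
  have "partition_on X P" "\<forall>e\<in>H. \<exists>W\<in>P. e \<subseteq> W"
    using assms(3) unfolding hyperedge_partition_def by blast+
  then have "Y \<subseteq> X" "finite P"
    using partition_onD1 assms(1,5) finite_elements by blast+
  then have "finite Y" using assms(1) finite_subset by blast
  show "Y \<noteq> {}" using partition_onD3[OF \<open>partition_on X P\<close>] assms(5) by blast
  fix Z f' f''
  assume "Z \<subseteq> Y \<and> f' \<in> Bool (Y - Z) \<and> f'' \<in> Bool Z \<and> restr (gamma X H) Y = star1 (Y - Z) Z f' f''"
  then have "Z \<subseteq> Y" "f' \<in> Bool (Y - Z)" "f'' \<in> Bool Z"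
    "gamma Y {e\<in>H. e \<subseteq> Y} = star1 (Y - Z) Z f' f''"
    using gamma_restrict[OF \<open>Y \<subseteq> X\<close>, of H] by simp_all
  then have split: "e \<subseteq> Y - Z \<or> e \<subseteq> Z" if "e \<in> H" "e \<subseteq> Y" for e
    using hyperedges_split_by_star1[OF \<open>finite Y\<close> hypergraph_restrict[OF assms(2)]] that by blast
  show "Z = {} \<or> Z = Y"
  proof (rule ccontr)
    assume "\<not> (Z = {} \<or> Z = Y)"
    let ?Q = "insert (Y - Z) (insert Z (P - {Y}))"
    have "partition_on X ?Q" "card ?Q = Suc (card P)"
      using partition_on_split_block[OF \<open>partition_on X P\<close> assms(5)] \<open>Z \<subseteq> Y\<close>
        \<open>\<not> (Z = {} \<or> Z = Y)\<close> \<open>finite P\<close> by auto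
    moreover have "\<exists>W\<in>?Q. e \<subseteq> W" if "e \<in> H" for e
      using \<open>\<forall>e\<in>H. \<exists>W\<in>P. e \<subseteq> W\<close> split[OF that] that by blast
    ultimately have "hyperedge_partition X H ?Q"
      unfolding hyperedge_partition_def by blast
    with finest \<open>card ?Q = Suc (card P)\<close> show False by fastforce
  qed
qed

lemma rigid_gamma:
  assumes "finite X" "hypergraph X H"
  shows "rigid X (gamma X H)"
proof -
  have "partition_on X (if X = {} then {} else {X})"
    by (simp add: partition_on_empty partition_on_space)
  then have "hyperedge_partition X H (if X = {} then {} else {X})"
    using assms(2) unfolding hyperedge_partition_def hypergraph_def by auto
  moreover have "card Q < Suc (card (Pow X))" if "hyperedge_partition X H Q" for Q
  proof -
    have "Q \<subseteq> Pow X"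
      using that unfolding hyperedge_partition_def partition_on_def by blast
    with assms(1) show ?thesis by (simp add: card_mono le_imp_less_Suc)
  qed
  ultimately obtain P where P: "hyperedge_partition X H P"
    and finest: "\<And>Q. hyperedge_partition X H Q \<Longrightarrow> card Q \<le> card P"
    using Lattices_Big.ex_has_greatest_nat[of "hyperedge_partition X H" _ card] by metis
  then have "partition_on X P"
    unfolding hyperedge_partition_def by blast
  have "indec_decomposition X (gamma X H) P"
    unfolding indec_decomposition_def
  proof (intro conjI ballI allI impI)
    show "\<Union>P = X" "{} \<notin> P"
      using \<open>partition_on X P\<close> unfolding partition_on_def by blast+
    show "Y \<inter> W = {}" if "Y \<in> P" "W \<in> P" "Y \<noteq> W" for Y W
      using disjointD[OF partition_onD2[OF \<open>partition_on X P\<close>] that] .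
    show "gamma X H A = (\<Sum>Y\<in>P. gamma X H (A \<inter> Y))" if "A \<subseteq> X" for A
      using gamma_sum_hyperedge_partition[OF assms P that] .
    show "indecomposable Y (restr (gamma X H) Y)" if "Y \<in> P" for Y
      using indecomposable_block_of_finest_hyperedge_partition[OF assms P finest that] .
  qed
  moreover have "rigid_indec Y (restr (gamma X H) Y)" if "Y \<in> P" for Y
  proof -
    have "Y \<subseteq> X" using partition_onD1[OF \<open>partition_on X P\<close>] that by blast
    then show ?thesis
      using rigid_indec_gamma[OF finite_subset[OF \<open>Y \<subseteq> X\<close> assms(1)] hypergraph_restrict[OF assms(2)]]
      by (simp add: gamma_restrict)
  qed
  ultimately show ?thesis
    unfolding rigid_def by blast
qed

lemma card_subsets_eq_card_psubsets:
  "finite e \<Longrightarrow> card {Y\<in>F. Y \<subseteq> e} = card {Y\<in>F. Y \<subset> e} + of_bool (e \<in> F)"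
proof -
  assume "finite e"
  then have "finite {Y\<in>F. Y \<subset> e}"
    using finite_subset[of "{Y\<in>F. Y \<subset> e}" "Pow e"] by auto
  moreover have "{Y\<in>F. Y \<subseteq> e} = (if e \<in> F then insert e {Y\<in>F. Y \<subset> e} else {Y\<in>F. Y \<subset> e})"
    by auto
  ultimately show ?thesis by simp
qed

lemma inj_on_gamma:
  assumes "finite X"
  shows "inj_on (gamma X) {E. hypergraph X E}"
proof (rule inj_onI, rule ccontr)
  fix E E' assume "E \<in> {E. hypergraph X E}" "E' \<in> {E. hypergraph X E}" "gamma X E = gamma X E'"
    and "E \<noteq> E'"
  let ?D = "(E - E') \<union> (E' - E)"
  have "?D \<subseteq> Pow X"
    using \<open>E \<in> _\<close> \<open>E' \<in> _\<close> unfolding hypergraph_def by blast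
  moreover have "?D \<noteq> {}" using \<open>E \<noteq> E'\<close> by blast
  ultimately obtain e where "e \<in> ?D" and "\<And>Y. Y \<in> ?D \<Longrightarrow> Y \<subseteq> e \<Longrightarrow> e = Y"
    using finite_has_minimal[of ?D] assms finite_subset by (metis finite_Pow_iff)
  then have "{Y\<in>E. Y \<subset> e} = {Y\<in>E'. Y \<subset> e}" by blast
  moreover have "e \<subseteq> X" "finite e"
    using \<open>e \<in> ?D\<close> \<open>?D \<subseteq> Pow X\<close> assms finite_subset by blast+
  moreover have "gamma X E e = gamma X E' e" using \<open>gamma X E = gamma X E'\<close> by simp
  ultimately have "e \<in> E \<longleftrightarrow> e \<in> E'"
    by (simp add: gamma_eq_card card_subsets_eq_card_psubsets of_bool_eq_iff)
  with \<open>e \<in> ?D\<close> show False by blast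
qed

lemma gamma_singleton:
  assumes "hypergraph X H" "x \<in> X"
  shows "gamma X H {x} = of_bool ({x} \<in> H)"
proof -
  have "{e\<in>H. e \<subseteq> {x}} = (if {x} \<in> H then {{x}} else {})"
    using assms(1) unfolding hypergraph_def by (auto simp: subset_singleton_iff)
  with assms(2) show ?thesis by (simp add: gamma_eq_card)
qed

lemma sum_gamma_singletons:
  assumes "finite X" "hypergraph X H" "A \<subseteq> X"
  shows "(\<Sum>x\<in>A. gamma X H {x}) = int (card {e\<in>H. e \<subseteq> A \<and> card e = 1})"
proof -
  have "finite A" using assms(1,3) finite_subset by blast
  have "{e\<in>H. e \<subseteq> A \<and> card e = 1} = (\<lambda>x. {x}) ` (A \<inter> {x. {x} \<in> H})"
    by (auto simp: card_1_singleton_iff)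
  then have "card {e\<in>H. e \<subseteq> A \<and> card e = 1} = card (A \<inter> {x. {x} \<in> H})"
    by (simp add: card_image)
  moreover have "(\<Sum>x\<in>A. gamma X H {x}) = (\<Sum>x\<in>A. of_bool ({x} \<in> H))"
    by (intro sum.cong refl) (simp add: gamma_singleton[OF assms(2)] subsetD[OF assms(3)])
  ultimately show ?thesis using \<open>finite A\<close> by simp
qed

lemma modular_gamma_iff:
  assumes "finite X" "hypergraph X H"
  shows "modular X (gamma X H) \<longleftrightarrow> (\<forall>e\<in>H. card e = 1)"
proof
  assume "modular X (gamma X H)"
  show "\<forall>e\<in>H. card e = 1"
  proof (rule ballI, rule ccontr)
    fix e assume "e \<in> H" "card e \<noteq> 1"
    have "e \<subseteq> X" using assms(2) \<open>e \<in> H\<close> unfolding hypergraph_def by blast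
    \<comment> \<open>\<open>e\<close> itself is counted by \<open>gamma X H e\<close> but not by the sum over its points\<close>
    have "{e'\<in>H. e' \<subseteq> e \<and> card e' = 1} \<subset> {e'\<in>H. e' \<subseteq> e}"
      using \<open>e \<in> H\<close> \<open>card e \<noteq> 1\<close> by blast
    then have "card {e'\<in>H. e' \<subseteq> e \<and> card e' = 1} < card {e'\<in>H. e' \<subseteq> e}"
      using finite_hyperedges[OF assms] by (simp add: psubset_card_mono)
    moreover have "gamma X H e = (\<Sum>x\<in>e. gamma X H {x})"
      using \<open>modular X (gamma X H)\<close> \<open>e \<subseteq> X\<close> unfolding modular_def by blast
    ultimately show False
      using sum_gamma_singletons[OF assms \<open>e \<subseteq> X\<close>] \<open>e \<subseteq> X\<close> by (simp add: gamma_eq_card)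
  qed
next
  assume "\<forall>e\<in>H. card e = 1"
  then have "{e\<in>H. e \<subseteq> A \<and> card e = 1} = {e\<in>H. e \<subseteq> A}" for A
    by blast
  then show "modular X (gamma X H)"
    unfolding modular_def using sum_gamma_singletons[OF assms] by (simp add: gamma_eq_card)
qed

theorem proposition4p16:
  fixes X :: "'a set" and H :: "'a set set"
  assumes "finite X" and "hypergraph X H"
  shows "inj_on (gamma X) {E. hypergraph X E}
    \<and> gamma X H \<in> Bool X
    \<and> rigid X (gamma X H)
    \<and> (\<forall>Y G K. finite Y \<and> X \<inter> Y = {} \<and> hypergraph X G \<and> hypergraph Y K \<longrightarrow>
          gamma (X \<union> Y) (G \<union> K) = star1 X Y (gamma X G) (gamma Y K))
    \<and> (\<forall>X'. X' \<subseteq> X \<longrightarrow> gamma X' {e\<in>H. e \<subseteq> X'} = restr (gamma X H) X')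
    \<and> (modular X (gamma X H) \<longleftrightarrow> (\<forall>e\<in>H. card e = 1))"
proof (intro conjI allI impI)
  show "inj_on (gamma X) {E. hypergraph X E}"
    using assms(1) by (rule inj_on_gamma)
  show "gamma X H \<in> Bool X"
    using assms(2) by (rule gamma_in_Bool)
  show "rigid X (gamma X H)"
    using assms by (rule rigid_gamma)
  show "gamma (X \<union> Y) (G \<union> K) = star1 X Y (gamma X G) (gamma Y K)"
    if "finite Y \<and> X \<inter> Y = {} \<and> hypergraph X G \<and> hypergraph Y K" for Y G K
    using that gamma_Un_disjoint_hypergraphs[OF assms(1)] by blast
  show "gamma X' {e\<in>H. e \<subseteq> X'} = restr (gamma X H) X'" if "X' \<subseteq> X" for X'
    using that by (rule gamma_restrict)
  show "modular X (gamma X H) \<longleftrightarrow> (\<forall>e\<in>H. card e = 1)"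
    using assms by (rule modular_gamma_iff)
qed

end
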